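(* Let $(X,d,\mu)$, $p$, $\underline{Q}_\mu$ be as in the context. Fix $\underline{\theta}\in[0,\min\{p,\underline{Q}_\mu\})$, $\theta\in[\underline{\theta},p)$, an integer $N\ge2$, numbers $0\le\theta_1<\dots<\theta_N=\underline{\theta}$, closed sets $S^i\in\mathcal{ADR}_{\theta_i}(X)$, and $\mathfrak m_k:=\sum_{i=1}^N2^{k(\theta-\theta_i)}\mathcal H_{\theta_i}\lfloor_{S^i}$, $k\in\mathbb N_0$. Then for each $c\ge1$ there is a constant $C>0$ such that for each $i\in\{1,\dots,N\}$ and each $k\in\mathbb N_0$ the following holds: if $\underline x\in X$ and $x\in S^i$ satisfy $B_k(x)\subset cB_k(\underline x)$, then $$2^{k(\theta-\theta_i)}\mathcal H_{\theta_i}(cB_k(\underline x)\cap S^i)\le\mathfrak m_k(cB_k(\underline x))\le C2^{k(\theta-\theta_i)}\mathcal H_{\theta_i}(B_k(x)\cap S^i).$$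
   Context: Standing setting: $(X,d)$ complete separable metric space, $\mu$ a Borel regular locally finite outer measure, $\operatorname{supp}\mu=X$, uniformly locally doubling (for every $R>0$, $\sup_{r\in(0,R]}\sup_x\mu(B_{2r}(x))/\mu(B_r(x))<\infty$). Balls are closed, $B_r(x)=\{y:d(x,y)\le r\}$, $cB_r(x)=B_{cr}(x)$, $B_k(x)=B_{2^{-k}}(x)$. A fixed $p\in(1,\infty)$; $X$ supports a weak local $(1,p)$-Poincaré inequality (for every $R>0$ there are $C,\lambda\ge1$ with $\inf_c\frac{1}{\mu(B_r(x))}\int_{B_r(x)}|f-c|d\mu\le Cr(\frac{1}{\mu(B_{\lambda r}(x))}\int_{B_{\lambda r}(x)}(\operatorname{lip}f)^pd\mu)^{1/p}$ for Lipschitz $f$, $x\in X$, $r\in(0,R]$). $\underline{Q}_\mu$ is the infimum of $Q>0$ such that for every $R>0$ there is $C$ with $(r_{B'}/r_B)^Q\le C\mu(B')/\mu(B)$ for balls $B'\subset B$, $0<r_{B'}\le r_B\le R$. $\mathcal H_{\vartheta,\delta}(E):=\inf\{\sum\mu(B_{r_i}(x_i))r_i^{-\vartheta}:E\subset\bigcup B_{r_i}(x_i),0<r_i<\delta\}$, $\mathcal H_\vartheta=\lim_{\delta\to0}\mathcal H_{\vartheta,\delta}$; $\mathfrak m\lfloor_S(E)=\mathfrak m(E\cap S)$. $\mathcal{ADR}_\vartheta(X)$: closed $S'$ with $\varkappa_1\mu(B_r(x))r^{-\vartheta}\le\mathcal H_\vartheta(B_r(x)\cap S')\le\varkappa_2\mu(B_r(x))r^{-\vartheta}$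 for $x\in S'$, $r\in(0,1]$. *)

theory Defs
  imports "HOL-Analysis.Analysis"
begin

definition outer_measure :: "('a set \<Rightarrow> ennreal) \<Rightarrow> bool" where
  "outer_measure \<mu> \<longleftrightarrow> \<mu> {} = 0 \<and> (\<forall>A B. A \<subseteq> B \<longrightarrow> \<mu> A \<le> \<mu> B)
     \<and> (\<forall>A :: nat \<Rightarrow> 'a set. \<mu> (\<Union>i. A i) \<le> (\<Sum>i. \<mu> (A i)))"

definition borel_regular :: "('a::topological_space set \<Rightarrow> ennreal) \<Rightarrow> bool" where
  "borel_regular \<mu> \<longleftrightarrow>
     (\<forall>B\<in>sets borel. \<forall>A. \<mu> A = \<mu> (A \<inter> B) + \<mu> (A - B))
     \<and> (\<forall>A. \<exists>B\<in>sets borel. A \<subseteq> B \<and> \<mu> B = \<mu> A)"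

definition locally_finite_om :: "('a::metric_space set \<Rightarrow> ennreal) \<Rightarrow> bool" where
  "locally_finite_om \<mu> \<longleftrightarrow> (\<forall>x. \<exists>r>0. \<mu> (cball x r) < \<infinity>)"

definition full_support :: "('a::metric_space set \<Rightarrow> ennreal) \<Rightarrow> bool" where
  "full_support \<mu> \<longleftrightarrow> (\<forall>x. \<forall>r>0. 0 < \<mu> (cball x r))"

definition unif_loc_doubling :: "('a::metric_space set \<Rightarrow> ennreal) \<Rightarrow> bool" where
  "unif_loc_doubling \<mu> \<longleftrightarrow> (\<forall>R>0. \<exists>C::real. \<forall>r. 0 < r \<and> r \<le> R \<longrightarrow>
      (\<forall>x. \<mu> (cball x (2*r)) \<le> ennreal C * \<mu> (cball x r)))"

definition mu_measure :: "('a::topological_space set \<Rightarrow> ennreal) \<Rightarrow> 'a measure" where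
  "mu_measure \<mu> = measure_of UNIV (sets borel) \<mu>"

definition avg :: "('a::topological_space set \<Rightarrow> ennreal) \<Rightarrow> 'a set \<Rightarrow> ('a \<Rightarrow> real) \<Rightarrow> real" where
  "avg \<mu> B g = enn2real (\<integral>\<^sup>+ y\<in>B. ennreal (g y) \<partial>(mu_measure \<mu>)) / enn2real (\<mu> B)"

definition lip :: "('a::metric_space \<Rightarrow> real) \<Rightarrow> 'a \<Rightarrow> real" where
  "lip f x = real_of_ereal (Liminf (at_right (0::real))
      (\<lambda>r. SUP y\<in>cball x r. ereal (\<bar>f y - f x\<bar> / r)))"

definition weak_local_poincare :: "('a::metric_space set \<Rightarrow> ennreal) \<Rightarrow> real \<Rightarrow> bool" where
  "weak_local_poincare \<mu> p \<longleftrightarrow> (\<forall>R>0. \<exists>C \<ge> 1. \<exists>lam \<ge> 1.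
     \<forall>f :: 'a \<Rightarrow> real. \<forall>x r. (\<exists>L. L-lipschitz_on UNIV f) \<and> 0 < r \<and> r \<le> R \<longrightarrow>
       (INF c::real. avg \<mu> (cball x r) (\<lambda>y. \<bar>f y - c\<bar>))
         \<le> C * r * (avg \<mu> (cball x (lam*r)) (\<lambda>y. lip f y powr p)) powr (1/p))"

definition standing_setting :: "('a::polish_space set \<Rightarrow> ennreal) \<Rightarrow> real \<Rightarrow> bool" where
  "standing_setting \<mu> p \<longleftrightarrow> outer_measure \<mu> \<and> borel_regular \<mu> \<and> locally_finite_om \<mu>
     \<and> full_support \<mu> \<and> unif_loc_doubling \<mu> \<and> 1 < p \<and> weak_local_poincare \<mu> p"

text \<open>Lower dimension Q_mu (balls given by center and radius).\<close>
definition Q_low :: "('a::metric_space set \<Rightarrow> ennreal) \<Rightarrow> real" where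
  "Q_low \<mu> = Inf {Q. 0 < Q \<and> (\<forall>R>0. \<exists>C::real. \<forall>x x' r r'.
      cball x' r' \<subseteq> cball x r \<and> 0 < r' \<and> r' \<le> r \<and> r \<le> R \<longrightarrow>
        ennreal ((r'/r) powr Q) * \<mu> (cball x r) \<le> ennreal C * \<mu> (cball x' r'))}"

text \<open>Codimensional Hausdorff contents H_{theta,delta} over countable covers
  (index set I of naturals, possibly finite).\<close>
definition H_delta :: "('a::metric_space set \<Rightarrow> ennreal) \<Rightarrow> real \<Rightarrow> real \<Rightarrow> 'a set \<Rightarrow> ennreal" where
  "H_delta \<mu> \<theta> \<delta> E = (INF (I, x, r) \<in> {(I :: nat set, x :: nat \<Rightarrow> 'a, r :: nat \<Rightarrow> real).
        E \<subseteq> (\<Union>i\<in>I. cball (x i) (r i)) \<and> (\<forall>i\<in>I. 0 < r i \<and> r i < \<delta>)}.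
      (\<Sum>i. if i \<in> I then \<mu> (cball (x i) (r i)) * ennreal (r i powr (-\<theta>)) else 0))"

definition H_cod :: "('a::metric_space set \<Rightarrow> ennreal) \<Rightarrow> real \<Rightarrow> 'a set \<Rightarrow> ennreal" where
  "H_cod \<mu> \<theta> E = (SUP \<delta>\<in>{0<..}. H_delta \<mu> \<theta> \<delta> E)"

definition ADR :: "('a::metric_space set \<Rightarrow> ennreal) \<Rightarrow> real \<Rightarrow> 'a set set" where
  "ADR \<mu> \<theta> = {S. closed S \<and> (\<exists>\<kappa>1 \<kappa>2. 0 < \<kappa>1 \<and> 0 < \<kappa>2 \<and>
      (\<forall>x\<in>S. \<forall>r. 0 < r \<and> r \<le> 1 \<longrightarrow>
        ennreal \<kappa>1 * \<mu> (cball x r) * ennreal (r powr (-\<theta>)) \<le> H_cod \<mu> \<theta> (cball x r \<inter> S)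
        \<and> H_cod \<mu> \<theta> (cball x r \<inter> S) \<le> ennreal \<kappa>2 * \<mu> (cball x r) * ennreal (r powr (-\<theta>))))}"

definition m_k :: "('a::metric_space set \<Rightarrow> ennreal) \<Rightarrow> real \<Rightarrow> nat \<Rightarrow> (nat \<Rightarrow> real)
     \<Rightarrow> (nat \<Rightarrow> 'a set) \<Rightarrow> nat \<Rightarrow> 'a set \<Rightarrow> ennreal" where
  "m_k \<mu> \<theta> N th S k E = (\<Sum>i\<in>{1..N}. ennreal (2 powr (real k * (\<theta> - th i))) * H_cod \<mu> (th i) (E \<inter> S i))"

end

theory Submission
  imports Defs
begin

(* The left inequality is one summand of m_k.  For the right one, fix a layer S j.  A maximal
   2^-k-separated subset of cB_k(xu) \<inter> S j has boundedly many points, because disjoint balls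
   of radius 2^-k/2 around them fit into a ball of comparable measure; the balls B_k(z) around
   these points cover cB_k(xu) \<inter> S j, and their measures are comparable to \<mu>(B_k(x)).  Upper
   Ahlfors regularity of S j and subadditivity of H_(th j) therefore bound the j-th summand of
   m_k by a constant times 2^(k \<theta>) \<mu>(B_k(x)), and lower Ahlfors regularity of S i at x bounds
   this quantity by a constant times 2^(k(\<theta> - th i)) H_(th i)(B_k(x) \<inter> S i). *)

lemma suminf_even_odd_ennreal:
  fixes f :: "nat \<Rightarrow> ennreal"
  shows "(\<Sum>n. f n) = (\<Sum>n. f (2*n)) + (\<Sum>n. f (2*n+1))"
proof -
  have "(\<lambda>n. sum f {n*2..<n*2+2}) sums (\<Sum>n. f n)"
    by (rule sums_group) (auto intro: summable_sums summableI)
  then have "(\<lambda>n. f (2*n) + f (2*n+1)) sums (\<Sum>n. f n)"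
    by (simp add: numeral_2_eq_2 mult.commute)
  then have "(\<Sum>n. f n) = (\<Sum>n. f (2*n) + f (2*n+1))"
    by (simp add: sums_unique)
  also have "\<dots> = (\<Sum>n. f (2*n)) + (\<Sum>n. f (2*n+1))"
    by (rule suminf_add[symmetric]) (auto intro: summableI)
  finally show ?thesis .
qed

definition delta_covers :: "real \<Rightarrow> 'a::metric_space set \<Rightarrow> (nat set \<times> (nat \<Rightarrow> 'a) \<times> (nat \<Rightarrow> real)) set"
  where "delta_covers \<delta> E = {(I, x, r). E \<subseteq> (\<Union>i\<in>I. cball (x i) (r i)) \<and> (\<forall>i\<in>I. 0 < r i \<and> r i < \<delta>)}"

definition cover_cost :: "('a::metric_space set \<Rightarrow> ennreal) \<Rightarrow> real \<Rightarrow> nat set \<times> (nat \<Rightarrow> 'a) \<times> (nat \<Rightarrow> real) \<Rightarrow> ennreal"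
  where "cover_cost \<mu> \<theta> = (\<lambda>(I, x, r). \<Sum>i. if i \<in> I then \<mu> (cball (x i) (r i)) * ennreal (r i powr (-\<theta>)) else 0)"

lemma H_delta_eq_INF_cover_cost: "H_delta \<mu> \<theta> \<delta> E = (INF t \<in> delta_covers \<delta> E. cover_cost \<mu> \<theta> t)"
  unfolding H_delta_def delta_covers_def cover_cost_def by simp

lemma H_delta_mono: "A \<subseteq> B \<Longrightarrow> H_delta \<mu> \<theta> \<delta> A \<le> H_delta \<mu> \<theta> \<delta> B"
  unfolding H_delta_eq_INF_cover_cost delta_covers_def by (rule INF_superset_mono) auto

lemma H_cod_mono: "A \<subseteq> B \<Longrightarrow> H_cod \<mu> \<theta> A \<le> H_cod \<mu> \<theta> B"
  unfolding H_cod_def by (intro SUP_mono) (blast intro: H_delta_mono)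

lemma H_cod_empty [simp]: "H_cod \<mu> \<theta> {} = 0"
proof -
  have "H_delta \<mu> \<theta> \<delta> {} \<le> 0" for \<delta>
    unfolding H_delta_eq_INF_cover_cost
    by (rule INF_lower2[of "({}, undefined, undefined)"]) (auto simp: delta_covers_def cover_cost_def)
  then show ?thesis
    unfolding H_cod_def by (simp add: le_zero_eq)
qed

lemma H_delta_Un_le_cover_cost:
  assumes "(I1, x1, r1) \<in> delta_covers \<delta> A" and "(I2, x2, r2) \<in> delta_covers \<delta> B"
  shows "H_delta \<mu> \<theta> \<delta> (A \<union> B) \<le> cover_cost \<mu> \<theta> (I1, x1, r1) + cover_cost \<mu> \<theta> (I2, x2, r2)"
proof -
  define I where "I = (\<lambda>n. 2*n) ` I1 \<union> (\<lambda>n. 2*n+1) ` I2"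
  define x where "x = (\<lambda>i. if even i then x1 (i div 2) else x2 (i div 2))"
  define r where "r = (\<lambda>i. if even i then r1 (i div 2) else r2 (i div 2))"
  have "(I, x, r) \<in> delta_covers \<delta> (A \<union> B)"
    using assms unfolding delta_covers_def I_def x_def r_def by (auto 0 3)
  then have "H_delta \<mu> \<theta> \<delta> (A \<union> B) \<le> cover_cost \<mu> \<theta> (I, x, r)"
    unfolding H_delta_eq_INF_cover_cost by (rule INF_lower)
  also have "\<dots> = cover_cost \<mu> \<theta> (I1, x1, r1) + cover_cost \<mu> \<theta> (I2, x2, r2)"
  proof -
    have "2*n \<in> I \<longleftrightarrow> n \<in> I1" "2*n+1 \<in> I \<longleftrightarrow> n \<in> I2" for n
      unfolding I_def by (auto, presburger+)
    moreover have "x (2*n) = x1 n" "r (2*n) = r1 n" "x (2*n+1) = x2 n" "r (2*n+1) = r2 n" for n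
      unfolding x_def r_def by auto
    ultimately show ?thesis
      unfolding cover_cost_def split by (subst suminf_even_odd_ennreal) (simp only:)
  qed
  finally show ?thesis .
qed

lemma H_delta_Un: "H_delta \<mu> \<theta> \<delta> (A \<union> B) \<le> H_delta \<mu> \<theta> \<delta> A + H_delta \<mu> \<theta> \<delta> B"
proof (cases "H_delta \<mu> \<theta> \<delta> A = \<infinity> \<or> H_delta \<mu> \<theta> \<delta> B = \<infinity>")
  case True
  then show ?thesis by auto
next
  case False
  show ?thesis
  proof (rule ennreal_le_epsilon)
    fix e :: real
    assume "0 < e"
    then have "0 < e/2" by simp
    from INF_approx_ennreal[OF this] False obtain t1 t2
      where t1: "t1 \<in> delta_covers \<delta> A" "cover_cost \<mu> \<theta> t1 < H_delta \<mu> \<theta> \<delta> A + ennreal (e/2)"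
        and t2: "t2 \<in> delta_covers \<delta> B" "cover_cost \<mu> \<theta> t2 < H_delta \<mu> \<theta> \<delta> B + ennreal (e/2)"
      unfolding H_delta_eq_INF_cover_cost by metis
    have "H_delta \<mu> \<theta> \<delta> (A \<union> B) \<le> cover_cost \<mu> \<theta> t1 + cover_cost \<mu> \<theta> t2"
      using H_delta_Un_le_cover_cost t1(1) t2(1) by (metis prod_cases3)
    also have "\<dots> \<le> (H_delta \<mu> \<theta> \<delta> A + ennreal (e/2)) + (H_delta \<mu> \<theta> \<delta> B + ennreal (e/2))"
      using t1 t2 by (intro add_mono) auto
    also have "\<dots> = H_delta \<mu> \<theta> \<delta> A + H_delta \<mu> \<theta> \<delta> B + ennreal e"
      using \<open>0 < e\<close> by (simp add: ac_simps flip: ennreal_plus)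
    finally show "H_delta \<mu> \<theta> \<delta> (A \<union> B) \<le> H_delta \<mu> \<theta> \<delta> A + H_delta \<mu> \<theta> \<delta> B + ennreal e" .
  qed
qed

lemma H_cod_Un: "H_cod \<mu> \<theta> (A \<union> B) \<le> H_cod \<mu> \<theta> A + H_cod \<mu> \<theta> B"
  unfolding H_cod_def
proof (rule SUP_least)
  fix \<delta> :: real
  assume "\<delta> \<in> {0<..}"
  then have "H_delta \<mu> \<theta> \<delta> A + H_delta \<mu> \<theta> \<delta> B
      \<le> (SUP \<delta>\<in>{0<..}. H_delta \<mu> \<theta> \<delta> A) + (SUP \<delta>\<in>{0<..}. H_delta \<mu> \<theta> \<delta> B)"
    by (intro add_mono SUP_upper)
  with H_delta_Un show "H_delta \<mu> \<theta> \<delta> (A \<union> B) \<le> \<dots>"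
    by (rule order_trans)
qed

lemma H_cod_UN_finite:
  "finite Z \<Longrightarrow> H_cod \<mu> \<theta> (\<Union>z\<in>Z. F z) \<le> (\<Sum>z\<in>Z. H_cod \<mu> \<theta> (F z))"
proof (induction Z rule: finite_induct)
  case empty
  then show ?case by simp
next
  case (insert z Z)
  have "H_cod \<mu> \<theta> (\<Union>z\<in>insert z Z. F z) \<le> H_cod \<mu> \<theta> (F z) + H_cod \<mu> \<theta> (\<Union>z\<in>Z. F z)"
    using H_cod_Un by simp
  also have "\<dots> \<le> H_cod \<mu> \<theta> (F z) + (\<Sum>z\<in>Z. H_cod \<mu> \<theta> (F z))"
    using insert.IH by (rule add_left_mono)
  finally show ?case
    using insert.hyps by simp
qed

lemma pairwise_dist_gt_imp_disjoint_cballs: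
  assumes "pairwise (\<lambda>z z'. s < dist z z') Z"
  shows "disjoint_family_on (\<lambda>z. cball z (s / 2)) Z"
  unfolding disjoint_family_on_def
proof (intro ballI impI)
  fix z z'
  assume "z \<in> Z" "z' \<in> Z" "z \<noteq> z'"
  then have "s < dist z z'"
    using assms by (simp add: pairwise_def)
  show "cball z (s / 2) \<inter> cball z' (s / 2) = {}"
  proof (rule ccontr)
    assume "cball z (s / 2) \<inter> cball z' (s / 2) \<noteq> {}"
    then obtain y where "dist z y \<le> s / 2" "dist z' y \<le> s / 2"
      by auto
    then show False
      using dist_triangle3[of z z' y] \<open>s < dist z z'\<close> by (simp add: dist_commute)
  qed
qed

lemma maximal_separated_subset_covers:
  fixes E :: "'a::metric_space set"
  assumes "0 \<le> s"
    and bound: "\<And>Z. finite Z \<Longrightarrow> Z \<subseteq> E \<Longrightarrow> pairwise (\<lambda>z z'. s < dist z z') Z \<Longrightarrow> card Z \<le> M"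
  obtains Z where "finite Z" "Z \<subseteq> E" "card Z \<le> M" "E \<subseteq> (\<Union>z\<in>Z. cball z s)"
proof -
  define sep where "sep n \<longleftrightarrow> (\<exists>Z. finite Z \<and> Z \<subseteq> E \<and> pairwise (\<lambda>z z'. s < dist z z') Z \<and> card Z = n)" for n
  have "sep 0"
    unfolding sep_def by (intro exI[of _ "{}"]) auto
  moreover have "\<forall>n. sep n \<longrightarrow> n \<le> M"
    unfolding sep_def using bound by blast
  ultimately obtain n where "sep n" and n_max: "\<forall>n'. sep n' \<longrightarrow> n' \<le> n"
    using Nat.ex_has_greatest_nat[of sep 0 M] by blast
  then obtain Z where Z: "finite Z" "Z \<subseteq> E" "pairwise (\<lambda>z z'. s < dist z z') Z" "card Z = n"
    unfolding sep_def by blast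
  have cover: "E \<subseteq> (\<Union>z\<in>Z. cball z s)"
  proof (rule ccontr)
    assume "\<not> ?thesis"
    then obtain e where e: "e \<in> E" "\<And>z. z \<in> Z \<Longrightarrow> s < dist z e"
      by (meson UN_I mem_cball not_le subsetI)
    then have "e \<notin> Z"
      using \<open>0 \<le> s\<close> by force
    have "pairwise (\<lambda>z z'. s < dist z z') (insert e Z)"
      using Z(3) e(2) by (simp add: pairwise_insert dist_commute)
    then have "sep (Suc n)"
      unfolding sep_def using Z e \<open>e \<notin> Z\<close> by (intro exI[of _ "insert e Z"]) auto
    then show False
      using n_max by fastforce
  qed
  show thesis
    by (rule that[OF Z(1,2) bound[OF Z(1-3)] cover])
qed

lemma ADR_upper_bound:
  assumes "S \<in> ADR \<mu> t"
  obtains \<kappa> where "0 < \<kappa>"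
    "\<And>x r. x \<in> S \<Longrightarrow> 0 < r \<Longrightarrow> r \<le> 1 \<Longrightarrow>
       H_cod \<mu> t (cball x r \<inter> S) \<le> ennreal \<kappa> * \<mu> (cball x r) * ennreal (r powr (-t))"
  using assms unfolding ADR_def by blast

lemma ADR_lower_bound:
  assumes "S \<in> ADR \<mu> t"
  obtains \<kappa> where "0 < \<kappa>"
    "\<And>x r. x \<in> S \<Longrightarrow> 0 < r \<Longrightarrow> r \<le> 1 \<Longrightarrow>
       ennreal \<kappa> * \<mu> (cball x r) * ennreal (r powr (-t)) \<le> H_cod \<mu> t (cball x r \<inter> S)"
  using assms unfolding ADR_def by blast

lemma dyadic_weight_scale:
  "2 powr (real k * (\<theta> - t)) * (2 powr (- real k)) powr (- t) = 2 powr (real k * \<theta>)"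
  by (simp add: powr_powr flip: powr_add) (simp add: algebra_simps)

lemma two_powr_neg_le_one: "(2::real) powr (- real k) \<le> 1"
  by (simp add: powr_minus_divide ge_one_powr_ge_zero)

lemma ADR_dyadic_lower_bound:
  assumes "S \<in> ADR \<mu> t"
  shows "\<exists>L>0. \<forall>k. \<forall>x\<in>S. ennreal L * (ennreal (2 powr (real k * \<theta>)) * \<mu> (cball x (2 powr (- real k))))
       \<le> ennreal (2 powr (real k * (\<theta> - t))) * H_cod \<mu> t (cball x (2 powr (- real k)) \<inter> S)"
proof -
  obtain L where "0 < L" and lower: "\<And>x r. x \<in> S \<Longrightarrow> 0 < r \<Longrightarrow> r \<le> 1 \<Longrightarrow>
       ennreal L * \<mu> (cball x r) * ennreal (r powr (-t)) \<le> H_cod \<mu> t (cball x r \<inter> S)"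
    using ADR_lower_bound[OF assms] by blast
  have "ennreal L * (ennreal (2 powr (real k * \<theta>)) * \<mu> (cball x (2 powr (- real k))))
      \<le> ennreal (2 powr (real k * (\<theta> - t))) * H_cod \<mu> t (cball x (2 powr (- real k)) \<inter> S)"
    if "x \<in> S" for k x
  proof -
    have "ennreal L * (ennreal (2 powr (real k * \<theta>)) * \<mu> (cball x (2 powr (- real k))))
        = ennreal (2 powr (real k * (\<theta> - t)))
          * (ennreal L * \<mu> (cball x (2 powr (- real k))) * ennreal ((2 powr (- real k)) powr (-t)))"
      using dyadic_weight_scale[of k \<theta> t] by (simp add: mult_ac flip: ennreal_mult)
    also have "\<dots> \<le> ennreal (2 powr (real k * (\<theta> - t))) * H_cod \<mu> t (cball x (2 powr (- real k)) \<inter> S)"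
      using lower[OF that, of "2 powr (- real k)"] two_powr_neg_le_one by (intro mult_left_mono) auto
    finally show ?thesis .
  qed
  with \<open>0 < L\<close> show ?thesis
    by blast
qed

(* The summand 1 keeps the constant positive even when all U j vanish. *)
lemma sum_le_via_common_scale:
  fixes f :: "'i \<Rightarrow> ennreal"
  assumes "finite J" "i \<in> J"
    and U: "\<And>j. j \<in> J \<Longrightarrow> 0 \<le> U j" and L: "\<And>j. j \<in> J \<Longrightarrow> 0 < L j"
    and f: "\<And>j. j \<in> J \<Longrightarrow> f j \<le> ennreal (U j) * a"
    and b: "ennreal (L i) * a \<le> b"
  shows "(\<Sum>j\<in>J. f j) \<le> ennreal ((\<Sum>j\<in>J. U j) * (\<Sum>j\<in>J. 1 / L j) + 1) * b"
proof -
  have "1 / L i \<le> (\<Sum>j\<in>J. 1 / L j)"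
    using assms(1,2) L by (intro member_le_sum) (auto intro: less_imp_le)
  then have scale: "(\<Sum>j\<in>J. U j) / L i \<le> (\<Sum>j\<in>J. U j) * (\<Sum>j\<in>J. 1 / L j) + 1"
    using U by (simp add: divide_inverse sum_nonneg mult_left_mono add_increasing2 [OF zero_le_one])
  have "(\<Sum>j\<in>J. f j) \<le> (\<Sum>j\<in>J. ennreal (U j) * a)"
    using f by (rule sum_mono)
  also have "\<dots> = ennreal (\<Sum>j\<in>J. U j) * a"
    using U by (simp add: sum_ennreal flip: sum_distrib_right)
  also have "\<dots> = ennreal ((\<Sum>j\<in>J. U j) / L i) * ennreal (L i) * a"
    using L[OF \<open>i \<in> J\<close>] by (simp flip: ennreal_mult'')
  also have "\<dots> = ennreal ((\<Sum>j\<in>J. U j) / L i) * (ennreal (L i) * a)"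
    by (simp add: mult.assoc)
  also have "\<dots> \<le> ennreal ((\<Sum>j\<in>J. U j) * (\<Sum>j\<in>J. 1 / L j) + 1) * b"
    using scale b by (intro mult_mono ennreal_leI) auto
  finally show ?thesis .
qed

locale doubling_outer_measure =
  fixes \<mu> :: "'a::metric_space set \<Rightarrow> ennreal"
  assumes outer_measure: "outer_measure \<mu>"
    and borel_regular: "borel_regular \<mu>"
    and locally_finite: "locally_finite_om \<mu>"
    and full_support: "full_support \<mu>"
    and doubling: "unif_loc_doubling \<mu>"

lemma standing_setting_imp_doubling_outer_measure:
  "standing_setting \<mu> p \<Longrightarrow> doubling_outer_measure \<mu>"
  unfolding standing_setting_def doubling_outer_measure_def by blast

context doubling_outer_measure
begin

lemma mono: "A \<subseteq> B \<Longrightarrow> \<mu> A \<le> \<mu> B"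
  using outer_measure unfolding outer_measure_def by blast

lemma empty [simp]: "\<mu> {} = 0"
  using outer_measure unfolding outer_measure_def by blast

lemma additive_finite_borel:
  assumes "finite Z" "disjoint_family_on A Z" "\<And>z. z \<in> Z \<Longrightarrow> A z \<in> sets borel"
  shows "\<mu> (\<Union>z\<in>Z. A z) = (\<Sum>z\<in>Z. \<mu> (A z))"
  using assms
proof (induction Z rule: finite_induct)
  case empty
  then show ?case by simp
next
  case (insert z Z)
  have "\<mu> (\<Union>z\<in>insert z Z. A z) = \<mu> ((\<Union>z\<in>insert z Z. A z) \<inter> A z) + \<mu> ((\<Union>z\<in>insert z Z. A z) - A z)"
    using borel_regular insert.prems(2) unfolding borel_regular_def by blast
  also have "(\<Union>z\<in>insert z Z. A z) - A z = (\<Union>z\<in>Z. A z)"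
    using insert.hyps(2) insert.prems(1) by (fastforce simp: disjoint_family_on_def)
  also have "\<mu> (\<Union>z\<in>Z. A z) = (\<Sum>z\<in>Z. \<mu> (A z))"
    using insert.prems by (intro insert.IH) (auto simp: disjoint_family_on_def)
  finally show ?case
    using insert.hyps by (simp add: Int_absorb1)
qed

lemma doubling_dilation:
  assumes "0 < R"
  obtains D where "0 \<le> D" "\<And>x r. 0 < r \<Longrightarrow> r \<le> R \<Longrightarrow> \<mu> (cball x (K * r)) \<le> ennreal D * \<mu> (cball x r)"
proof -
  obtain m :: nat where "K < 2^m"
    using real_arch_pow[of 2 K] by auto
  obtain C :: real where C: "\<And>r x. 0 < r \<Longrightarrow> r \<le> 2^m * R \<Longrightarrow> \<mu> (cball x (2*r)) \<le> ennreal C * \<mu> (cball x r)"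
    using doubling \<open>0 < R\<close> unfolding unif_loc_doubling_def by (metis zero_less_numeral zero_less_power mult_pos_pos)
  have iter: "\<mu> (cball x (2^n * r)) \<le> ennreal (max C 0 ^ n) * \<mu> (cball x r)"
    if "n \<le> m" "0 < r" "r \<le> R" for n x r
    using that(1)
  proof (induction n)
    case 0
    then show ?case by simp
  next
    case (Suc n)
    have "2^n * r \<le> 2^m * R"
      using \<open>Suc n \<le> m\<close> \<open>0 < r\<close> \<open>r \<le> R\<close> by (intro mult_mono) auto
    then have "\<mu> (cball x (2^Suc n * r)) \<le> ennreal C * \<mu> (cball x (2^n * r))"
      using C[of "2^n * r" x] \<open>0 < r\<close> by (simp add: mult.assoc)
    also have "\<dots> \<le> ennreal (max C 0) * (ennreal (max C 0 ^ n) * \<mu> (cball x r))"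
      using Suc by (intro mult_mono ennreal_leI) auto
    finally show ?case
      by (simp add: ennreal_mult mult.assoc)
  qed
  show thesis
  proof (rule that[of "max C 0 ^ m"])
    fix x r
    assume "0 < r" "r \<le> R"
    then have "\<mu> (cball x (K * r)) \<le> \<mu> (cball x (2^m * r))"
      using \<open>K < 2^m\<close> by (intro mono subset_cball mult_right_mono) auto
    also have "\<dots> \<le> ennreal (max C 0 ^ m) * \<mu> (cball x r)"
      using iter \<open>0 < r\<close> \<open>r \<le> R\<close> by blast
    finally show "\<mu> (cball x (K * r)) \<le> ennreal (max C 0 ^ m) * \<mu> (cball x r)" .
  qed simp
qed

lemma cball_finite: "\<mu> (cball x \<rho>) < \<infinity>"
proof -
  obtain r where "0 < r" "\<mu> (cball x r) < \<infinity>"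
    using locally_finite unfolding locally_finite_om_def by blast
  moreover obtain D where "\<mu> (cball x ((\<rho> / r) * r)) \<le> ennreal D * \<mu> (cball x r)"
    using doubling_dilation[OF \<open>0 < r\<close>, of "\<rho> / r"] \<open>0 < r\<close> by blast
  ultimately show ?thesis
    by (simp add: ennreal_mult_less_top order.strict_trans1)
qed

lemma cball_comparable:
  assumes "0 < R"
  obtains D where "0 \<le> D"
    "\<And>x z s. 0 < s \<Longrightarrow> s \<le> R \<Longrightarrow> dist x z \<le> a * s \<Longrightarrow> \<mu> (cball z s) \<le> ennreal D * \<mu> (cball x s)"
proof -
  obtain D where D: "0 \<le> D" "\<And>x r. 0 < r \<Longrightarrow> r \<le> R \<Longrightarrow> \<mu> (cball x ((a + 1) * r)) \<le> ennreal D * \<mu> (cball x r)"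
    using doubling_dilation[OF assms] by blast
  show thesis
  proof (rule that[OF D(1)])
    fix x z :: 'a and s :: real
    assume "0 < s" "s \<le> R" "dist x z \<le> a * s"
    have "cball z s \<subseteq> cball x ((a + 1) * s)"
    proof
      fix y
      assume "y \<in> cball z s"
      then show "y \<in> cball x ((a + 1) * s)"
        using dist_triangle[of x y z] \<open>dist x z \<le> a * s\<close> by (simp add: algebra_simps)
    qed
    then show "\<mu> (cball z s) \<le> ennreal D * \<mu> (cball x s)"
      using mono D(2) \<open>0 < s\<close> \<open>s \<le> R\<close> by (meson order_trans)
  qed
qed

lemma card_le_by_disjoint_mass:
  assumes "finite Z" "disjoint_family_on A Z" "\<And>z. z \<in> Z \<Longrightarrow> A z \<in> sets borel"
    and "(\<Union>z\<in>Z. A z) \<subseteq> B" "0 < \<mu> B" "\<mu> B < \<infinity>"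
    and "0 \<le> D" "\<And>z. z \<in> Z \<Longrightarrow> \<mu> B \<le> ennreal D * \<mu> (A z)"
  shows "real (card Z) \<le> D"
proof -
  have "ennreal (real (card Z)) * \<mu> B = (\<Sum>z\<in>Z. \<mu> B)"
    by (simp add: ennreal_of_nat_eq_real_of_nat)
  also have "\<dots> \<le> ennreal D * (\<Sum>z\<in>Z. \<mu> (A z))"
    unfolding sum_distrib_left using assms(8) by (rule sum_mono)
  also have "\<dots> = ennreal D * \<mu> (\<Union>z\<in>Z. A z)"
    using additive_finite_borel[OF assms(1-3)] by simp
  also have "\<dots> \<le> ennreal D * \<mu> B"
    using mono[OF assms(4)] by (rule mult_left_mono) simp
  finally have le: "ennreal (real (card Z)) * \<mu> B \<le> ennreal D * \<mu> B" .
  obtain b where "\<mu> B = ennreal b" "0 < b"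
    using assms(5,6) by (cases "\<mu> B") auto
  with le \<open>0 \<le> D\<close> have "real (card Z) * b \<le> D * b"
    by (simp flip: ennreal_mult)
  with \<open>0 < b\<close> show ?thesis
    by simp
qed

lemma separated_card_bound:
  assumes "0 < R" "0 \<le> c"
  obtains M :: nat where "\<And>s (w::'a) Z. 0 < s \<Longrightarrow> s \<le> R \<Longrightarrow> finite Z \<Longrightarrow> Z \<subseteq> cball w (c * s) \<Longrightarrow>
      pairwise (\<lambda>z z'. s < dist z z') Z \<Longrightarrow> card Z \<le> M"
proof -
  obtain D where "0 \<le> D"
    and D: "\<And>x r. 0 < r \<Longrightarrow> r \<le> R / 2 \<Longrightarrow> \<mu> (cball x ((4 * c + 2) * r)) \<le> ennreal D * \<mu> (cball x r)"
    using doubling_dilation[of "R / 2"] \<open>0 < R\<close> by auto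
  show thesis
  proof (rule that[of "nat \<lceil>D\<rceil>"])
    fix s w and Z :: "'a set"
    assume "0 < s" "s \<le> R" "finite Z" and Z_sub: "Z \<subseteq> cball w (c * s)"
      and sep: "pairwise (\<lambda>z z'. s < dist z z') Z"
    define B where "B = cball w ((c + 1) * s)"
    have "real (card Z) \<le> D"
    proof (rule card_le_by_disjoint_mass[of Z "\<lambda>z. cball z (s / 2)" B])
      show "(\<Union>z\<in>Z. cball z (s / 2)) \<subseteq> B"
      proof safe
        fix z y
        assume "z \<in> Z" "y \<in> cball z (s / 2)"
        then show "y \<in> B"
          using Z_sub dist_triangle[of w y z] \<open>0 < s\<close> by (force simp: B_def algebra_simps)
      qed
      show "0 < \<mu> B" "\<mu> B < \<infinity>"
        using full_support cball_finite \<open>0 < s\<close> \<open>0 \<le> c\<close> by (auto simp: B_def full_support_def)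
      show "\<mu> B \<le> ennreal D * \<mu> (cball z (s / 2))" if "z \<in> Z" for z
      proof -
        have "B \<subseteq> cball z ((4 * c + 2) * (s / 2))"
        proof
          fix y
          assume "y \<in> B"
          moreover have "dist w z \<le> c * s"
            using Z_sub \<open>z \<in> Z\<close> by auto
          ultimately show "y \<in> cball z ((4 * c + 2) * (s / 2))"
            using dist_triangle[of z y w] \<open>0 < s\<close> \<open>0 \<le> c\<close>
            by (simp add: B_def dist_commute algebra_simps)
        qed
        then have "\<mu> B \<le> \<mu> (cball z ((4 * c + 2) * (s / 2)))"
          by (rule mono)
        also have "\<dots> \<le> ennreal D * \<mu> (cball z (s / 2))"
          using D[of "s / 2" z] \<open>0 < s\<close> \<open>s \<le> R\<close> by linarith
        finally show ?thesis .
      qed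
    qed (use \<open>finite Z\<close> \<open>0 \<le> D\<close> sep pairwise_dist_gt_imp_disjoint_cballs in auto)
    then show "card Z \<le> nat \<lceil>D\<rceil>"
      by linarith
  qed
qed

lemma bounded_cover_by_cballs:
  assumes "0 < R" "0 \<le> c"
  obtains M :: nat where "\<And>s (w::'a) E. 0 < s \<Longrightarrow> s \<le> R \<Longrightarrow> E \<subseteq> cball w (c * s) \<Longrightarrow>
      \<exists>Z. finite Z \<and> Z \<subseteq> E \<and> card Z \<le> M \<and> E \<subseteq> (\<Union>z\<in>Z. cball z s)"
proof -
  obtain M where M: "\<And>s (w::'a) Z. 0 < s \<Longrightarrow> s \<le> R \<Longrightarrow> finite Z \<Longrightarrow> Z \<subseteq> cball w (c * s) \<Longrightarrow>
      pairwise (\<lambda>z z'. s < dist z z') Z \<Longrightarrow> card Z \<le> M"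
    using separated_card_bound[OF assms] by blast
  show thesis
  proof (rule that)
    fix s and w :: 'a and E
    assume s: "0 < s" "s \<le> R" and E: "E \<subseteq> cball w (c * s)"
    have "card Z \<le> M" if "finite Z" "Z \<subseteq> E" "pairwise (\<lambda>z z'. s < dist z z') Z" for Z
      using M[OF s that(1) _ that(3)] that(2) E by blast
    then obtain Z where "finite Z" "Z \<subseteq> E" "card Z \<le> M" "E \<subseteq> (\<Union>z\<in>Z. cball z s)"
      using maximal_separated_subset_covers[of s E M] s by auto
    then show "\<exists>Z. finite Z \<and> Z \<subseteq> E \<and> card Z \<le> M \<and> E \<subseteq> (\<Union>z\<in>Z. cball z s)"
      by blast
  qed
qed

lemma ADR_cover_upper_bound:
  assumes "S \<in> ADR \<mu> t" "0 \<le> c"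
  obtains U where "0 \<le> U"
    "\<And>s xu x. 0 < s \<Longrightarrow> s \<le> 1 \<Longrightarrow> dist xu x \<le> c * s \<Longrightarrow>
       H_cod \<mu> t (cball xu (c * s) \<inter> S) \<le> ennreal U * \<mu> (cball x s) * ennreal (s powr (-t))"
proof -
  obtain \<kappa> where "0 < \<kappa>" and upper: "\<And>z r. z \<in> S \<Longrightarrow> 0 < r \<Longrightarrow> r \<le> 1 \<Longrightarrow>
       H_cod \<mu> t (cball z r \<inter> S) \<le> ennreal \<kappa> * \<mu> (cball z r) * ennreal (r powr (-t))"
    using ADR_upper_bound[OF assms(1)] by blast
  obtain M :: nat where M: "\<And>s (w::'a) E. 0 < s \<Longrightarrow> s \<le> 1 \<Longrightarrow> E \<subseteq> cball w (c * s) \<Longrightarrow>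
      \<exists>Z. finite Z \<and> Z \<subseteq> E \<and> card Z \<le> M \<and> E \<subseteq> (\<Union>z\<in>Z. cball z s)"
    by (rule bounded_cover_by_cballs[of 1 c]) (use \<open>0 \<le> c\<close> in auto)
  obtain Q where "0 \<le> Q" and Q: "\<And>x z s. 0 < s \<Longrightarrow> s \<le> 1 \<Longrightarrow> dist x z \<le> (2 * c) * s \<Longrightarrow>
      \<mu> (cball z s) \<le> ennreal Q * \<mu> (cball x s)"
    using cball_comparable[of 1 "2 * c"] by auto
  show thesis
  proof (rule that[of "M * \<kappa> * Q"])
    show "0 \<le> M * \<kappa> * Q"
      using \<open>0 < \<kappa>\<close> \<open>0 \<le> Q\<close> by simp
    fix s :: real and xu x :: 'a
    assume s: "0 < s" "s \<le> 1" and "dist xu x \<le> c * s"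
    define E where "E = cball xu (c * s) \<inter> S"
    define T where "T = \<mu> (cball x s) * ennreal (s powr (-t))"
    obtain Z where Z: "finite Z" "Z \<subseteq> E" "card Z \<le> M" "E \<subseteq> (\<Union>z\<in>Z. cball z s)"
      using M[OF s, of E xu] by (auto simp: E_def)
    have ball_bound: "H_cod \<mu> t (cball z s \<inter> S) \<le> ennreal (\<kappa> * Q) * T" if "z \<in> Z" for z
    proof -
      have "z \<in> S" "dist xu z \<le> c * s"
        using Z(2) \<open>z \<in> Z\<close> by (auto simp: E_def)
      then have "dist x z \<le> (2 * c) * s"
        using dist_triangle[of x z xu] \<open>dist xu x \<le> c * s\<close> by (simp add: dist_commute)
      then have "ennreal \<kappa> * \<mu> (cball z s) * ennreal (s powr (-t))
          \<le> ennreal \<kappa> * (ennreal Q * \<mu> (cball x s)) * ennreal (s powr (-t))"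
        using Q s by (intro mult_right_mono mult_left_mono) auto
      then show ?thesis
        using upper[OF \<open>z \<in> S\<close> s] \<open>0 < \<kappa>\<close> \<open>0 \<le> Q\<close>
        by (simp add: T_def ennreal_mult mult_ac)
    qed
    have "H_cod \<mu> t E \<le> H_cod \<mu> t (\<Union>z\<in>Z. cball z s \<inter> S)"
      using Z(4) by (intro H_cod_mono) (auto simp: E_def)
    also have "\<dots> \<le> (\<Sum>z\<in>Z. H_cod \<mu> t (cball z s \<inter> S))"
      using Z(1) by (rule H_cod_UN_finite)
    also have "\<dots> \<le> of_nat (card Z) * (ennreal (\<kappa> * Q) * T)"
      using sum_mono[OF ball_bound] by simp
    also have "\<dots> \<le> of_nat M * (ennreal (\<kappa> * Q) * T)"
      using Z(3) by (intro mult_right_mono) auto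
    also have "\<dots> = ennreal (M * \<kappa> * Q) * \<mu> (cball x s) * ennreal (s powr (-t))"
      using \<open>0 < \<kappa>\<close> \<open>0 \<le> Q\<close> by (simp add: T_def ennreal_mult ennreal_of_nat_eq_real_of_nat mult_ac)
    finally show "H_cod \<mu> t (cball xu (c * s) \<inter> S) \<le> ennreal (M * \<kappa> * Q) * \<mu> (cball x s) * ennreal (s powr (-t))"
      by (simp add: E_def)
  qed
qed

lemma ADR_dyadic_upper_bound:
  assumes "S \<in> ADR \<mu> t" "0 \<le> c"
  shows "\<exists>U\<ge>0. \<forall>k xu x. dist xu x \<le> c * 2 powr (- real k) \<longrightarrow>
       ennreal (2 powr (real k * (\<theta> - t))) * H_cod \<mu> t (cball xu (c * 2 powr (- real k)) \<inter> S)
         \<le> ennreal U * (ennreal (2 powr (real k * \<theta>)) * \<mu> (cball x (2 powr (- real k))))"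
proof -
  obtain U where "0 \<le> U" and U: "\<And>s xu x. 0 < s \<Longrightarrow> s \<le> 1 \<Longrightarrow> dist xu x \<le> c * s \<Longrightarrow>
       H_cod \<mu> t (cball xu (c * s) \<inter> S) \<le> ennreal U * \<mu> (cball x s) * ennreal (s powr (-t))"
    using ADR_cover_upper_bound[OF assms] by blast
  have "ennreal (2 powr (real k * (\<theta> - t))) * H_cod \<mu> t (cball xu (c * 2 powr (- real k)) \<inter> S)
      \<le> ennreal U * (ennreal (2 powr (real k * \<theta>)) * \<mu> (cball x (2 powr (- real k))))"
    if "dist xu x \<le> c * 2 powr (- real k)" for k xu x
  proof -
    have "ennreal (2 powr (real k * (\<theta> - t))) * H_cod \<mu> t (cball xu (c * 2 powr (- real k)) \<inter> S)
        \<le> ennreal (2 powr (real k * (\<theta> - t))) * (ennreal U * \<mu> (cball x (2 powr (- real k)))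
            * ennreal ((2 powr (- real k)) powr (-t)))"
      using U[of "2 powr (- real k)"] that two_powr_neg_le_one by (intro mult_left_mono) auto
    also have "\<dots> = ennreal U * (ennreal (2 powr (real k * \<theta>)) * \<mu> (cball x (2 powr (- real k))))"
      using dyadic_weight_scale[of k \<theta> t] by (simp add: mult_ac flip: ennreal_mult)
    finally show ?thesis .
  qed
  with \<open>0 \<le> U\<close> show ?thesis
    by blast
qed

lemma ADR_layers_dyadic_bound:
  assumes "finite J" and ADR: "\<And>j. j \<in> J \<Longrightarrow> S j \<in> ADR \<mu> (th j)" and "0 \<le> c"
  obtains C where "0 < C"
    "\<And>i k xu x. i \<in> J \<Longrightarrow> x \<in> S i \<Longrightarrow> dist xu x \<le> c * 2 powr (- real k) \<Longrightarrow>
      (\<Sum>j\<in>J. ennreal (2 powr (real k * (\<theta> - th j))) * H_cod \<mu> (th j) (cball xu (c * 2 powr (- real k)) \<inter> S j))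
        \<le> ennreal C * ennreal (2 powr (real k * (\<theta> - th i))) * H_cod \<mu> (th i) (cball x (2 powr (- real k)) \<inter> S i)"
proof -
  define W where "W j k y r = ennreal (2 powr (real k * (\<theta> - th j))) * H_cod \<mu> (th j) (cball y r \<inter> S j)"
    for j k y r
  define V where "V k x = ennreal (2 powr (real k * \<theta>)) * \<mu> (cball x (2 powr (- real k)))" for k x
  have "\<forall>j\<in>J. \<exists>u\<ge>0. \<forall>k xu x. dist xu x \<le> c * 2 powr (- real k) \<longrightarrow>
      W j k xu (c * 2 powr (- real k)) \<le> ennreal u * V k x"
    unfolding W_def V_def using ADR ADR_dyadic_upper_bound \<open>0 \<le> c\<close> by blast
  then obtain U where U: "\<forall>j\<in>J. 0 \<le> U j \<and> (\<forall>k xu x. dist xu x \<le> c * 2 powr (- real k) \<longrightarrow>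
      W j k xu (c * 2 powr (- real k)) \<le> ennreal (U j) * V k x)"
    by (rule bchoice[elim_format]) blast
  have "\<forall>j\<in>J. \<exists>l>0. \<forall>k. \<forall>x\<in>S j. ennreal l * V k x \<le> W j k x (2 powr (- real k))"
    unfolding W_def V_def using ADR ADR_dyadic_lower_bound by blast
  then obtain L where L: "\<forall>j\<in>J. 0 < L j \<and> (\<forall>k. \<forall>x\<in>S j. ennreal (L j) * V k x \<le> W j k x (2 powr (- real k)))"
    by (rule bchoice[elim_format]) blast
  show thesis
  proof (rule that)
    show "0 < (\<Sum>j\<in>J. U j) * (\<Sum>j\<in>J. 1 / L j) + 1"
      using U L by (intro add_nonneg_pos mult_nonneg_nonneg sum_nonneg) auto
    fix i k xu x
    assume "i \<in> J" "x \<in> S i" "dist xu x \<le> c * 2 powr (- real k)"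
    then have "(\<Sum>j\<in>J. W j k xu (c * 2 powr (- real k)))
        \<le> ennreal ((\<Sum>j\<in>J. U j) * (\<Sum>j\<in>J. 1 / L j) + 1) * W i k x (2 powr (- real k))"
      using U L \<open>finite J\<close> by (intro sum_le_via_common_scale[where a="V k x"]) auto
    then show "(\<Sum>j\<in>J. ennreal (2 powr (real k * (\<theta> - th j))) * H_cod \<mu> (th j) (cball xu (c * 2 powr (- real k)) \<inter> S j))
        \<le> ennreal ((\<Sum>j\<in>J. U j) * (\<Sum>j\<in>J. 1 / L j) + 1) * ennreal (2 powr (real k * (\<theta> - th i)))
          * H_cod \<mu> (th i) (cball x (2 powr (- real k)) \<inter> S i)"
      by (simp add: W_def mult.assoc)
  qed
qed

lemma m_k_comparable_to_layer:
  assumes "\<And>i. i \<in> {1..N} \<Longrightarrow> S i \<in> ADR \<mu> (th i)" and "0 \<le> c"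
  shows "\<exists>C::real > 0. \<forall>i\<in>{1..N}. \<forall>k::nat. \<forall>xu x.
     x \<in> S i \<and> cball x (2 powr (- real k)) \<subseteq> cball xu (c * 2 powr (- real k)) \<longrightarrow>
       ennreal (2 powr (real k * (\<theta> - th i))) * H_cod \<mu> (th i) (cball xu (c * 2 powr (- real k)) \<inter> S i)
         \<le> m_k \<mu> \<theta> N th S k (cball xu (c * 2 powr (- real k)))
       \<and> m_k \<mu> \<theta> N th S k (cball xu (c * 2 powr (- real k)))
         \<le> ennreal C * ennreal (2 powr (real k * (\<theta> - th i))) * H_cod \<mu> (th i) (cball x (2 powr (- real k)) \<inter> S i)"
proof -
  obtain C where "0 < C" and C: "\<And>i k xu x. i \<in> {1..N} \<Longrightarrow> x \<in> S i \<Longrightarrow> dist xu x \<le> c * 2 powr (- real k) \<Longrightarrow>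
      m_k \<mu> \<theta> N th S k (cball xu (c * 2 powr (- real k)))
        \<le> ennreal C * ennreal (2 powr (real k * (\<theta> - th i))) * H_cod \<mu> (th i) (cball x (2 powr (- real k)) \<inter> S i)"
    using ADR_layers_dyadic_bound[of "{1..N}" S th c \<theta>] assms unfolding m_k_def by auto
  show ?thesis
  proof (intro exI[of _ C] conjI \<open>0 < C\<close> ballI allI impI)
    fix i k xu x
    assume "i \<in> {1..N}" and x: "x \<in> S i \<and> cball x (2 powr (- real k)) \<subseteq> cball xu (c * 2 powr (- real k))"
    then show "ennreal (2 powr (real k * (\<theta> - th i))) * H_cod \<mu> (th i) (cball xu (c * 2 powr (- real k)) \<inter> S i)
        \<le> m_k \<mu> \<theta> N th S k (cball xu (c * 2 powr (- real k)))"
      unfolding m_k_def by (intro member_le_sum) auto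
    have "x \<in> cball x (2 powr (- real k))"
      by simp
    then have "x \<in> cball xu (c * 2 powr (- real k))"
      using x by blast
    with C \<open>i \<in> {1..N}\<close> x show "m_k \<mu> \<theta> N th S k (cball xu (c * 2 powr (- real k)))
        \<le> ennreal C * ennreal (2 powr (real k * (\<theta> - th i))) * H_cod \<mu> (th i) (cball x (2 powr (- real k)) \<inter> S i)"
      by simp
  qed
qed

end

theorem proposition3p2:
  fixes \<mu> :: "'a::polish_space set \<Rightarrow> ennreal"
    and p \<theta>low \<theta> :: real and N :: nat and th :: "nat \<Rightarrow> real" and S :: "nat \<Rightarrow> 'a set"
  assumes setting: "standing_setting \<mu> p"
    and "0 \<le> \<theta>low" and "\<theta>low < min p (Q_low \<mu>)"
    and "\<theta>low \<le> \<theta>" and "\<theta> < p"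
    and "2 \<le> N"
    and "0 \<le> th 1" and "\<And>i j. 1 \<le> i \<Longrightarrow> i < j \<Longrightarrow> j \<le> N \<Longrightarrow> th i < th j"
    and "th N = \<theta>low"
    and "\<And>i. 1 \<le> i \<Longrightarrow> i \<le> N \<Longrightarrow> S i \<in> ADR \<mu> (th i)"
  shows "\<forall>c::real \<ge> 1. \<exists>C::real > 0. \<forall>i\<in>{1..N}. \<forall>k::nat. \<forall>xu x.
     x \<in> S i \<and> cball x (2 powr (- real k)) \<subseteq> cball xu (c * 2 powr (- real k)) \<longrightarrow>
       ennreal (2 powr (real k * (\<theta> - th i))) * H_cod \<mu> (th i) (cball xu (c * 2 powr (- real k)) \<inter> S i)
         \<le> m_k \<mu> \<theta> N th S k (cball xu (c * 2 powr (- real k)))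
       \<and> m_k \<mu> \<theta> N th S k (cball xu (c * 2 powr (- real k)))
         \<le> ennreal C * ennreal (2 powr (real k * (\<theta> - th i))) * H_cod \<mu> (th i) (cball x (2 powr (- real k)) \<inter> S i)"
proof -
  interpret doubling_outer_measure \<mu>
    using setting by (rule standing_setting_imp_doubling_outer_measure)
  show ?thesis
    by (intro allI impI m_k_comparable_to_layer) (use assms(10) in auto)
qed

end
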